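(* Let $n\ge5$ and let $M=(m_1,\dots,m_t)$ be a list of integers with $2\le m_i\le n$ for all $i$ and $\sum M=n$. Then there is an $(M,n,n,n)$-decomposition of $2\langle\{1,2\}\rangle_n$.
   Context: Graphs may have multiple edges but no loops. For $m\ge2$, an $m$-cycle is a cycle with $m$ edges; a $2$-cycle consists of two parallel edges. For a graph $G$ and a positive integer $\lambda$, $\lambda G$ is the graph on $V(G)$ in which each pair of vertices is joined by $\lambda$ times as many edges as in $G$. For distinct $i,j\in\{0,\dots,n-1\}$, $d_n(i,j)$ is the distance between $i$ and $j$ in the cycle $(0,1,\dots,n-1)$. For $S\subseteq\{1,\dots,\lfloor n/2\rfloor\}$, the circulant $\langle S\rangle_n$ is the simple graph with vertex set $\{0,\dots,n-1\}$ and edge set $\{\{i,j\}:d_n(i,j)\in S\}$. A list is a finite multiset of integers, and $\sum M$ is the sum of its entries. For a list $M=(m_1,\dots,m_t)$, an $(M)$-decomposition of a graph all of whose degrees are even is a decomposition into cycles $G_1,\dots,G_t$ with $G_i$ an $m_i$-cycle. *)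

theory Defs
  imports Main "HOL-Library.Multiset"
begin

text \<open>Multigraphs are represented as multisets of edges; an edge is a 2-element
  set of vertices (so no loops). Vertices are natural numbers.\<close>

type_synonym mgraph = "nat set multiset"

definition is_mgraph :: "mgraph \<Rightarrow> bool" where
  "is_mgraph G \<longleftrightarrow> (\<forall>e \<in># G. card e = 2)"

definition cycle_edges :: "nat list \<Rightarrow> mgraph" where
  "cycle_edges vs = mset (map (\<lambda>i. {vs ! i, vs ! ((i + 1) mod length vs)}) [0..<length vs])"

text \<open>An m-cycle (m \<ge> 2); a 2-cycle is a pair of parallel edges.\<close>
definition is_cycle :: "nat \<Rightarrow> mgraph \<Rightarrow> bool" where
  "is_cycle m C \<longleftrightarrow> (\<exists>vs. 2 \<le> m \<and> length vs = m \<and> distinct vs \<and> C = cycle_edges vs)"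

definition has_cycle_decomp :: "nat list \<Rightarrow> mgraph \<Rightarrow> bool" where
  "has_cycle_decomp M G \<longleftrightarrow>
     (\<exists>Cs. length Cs = length M \<and> (\<forall>i < length M. is_cycle (M ! i) (Cs ! i))
           \<and> sum_list Cs = G)"

definition cdist :: "nat \<Rightarrow> nat \<Rightarrow> nat \<Rightarrow> nat" where
  "cdist n i j = min (if i \<le> j then j - i else i - j) (n - (if i \<le> j then j - i else i - j))"

definition circulant :: "nat set \<Rightarrow> nat \<Rightarrow> mgraph" where
  "circulant S n = mset_set {{i, j} | i j. i < n \<and> j < n \<and> i \<noteq> j \<and> cdist n i j \<in> S}"

definition mult_graph :: "nat \<Rightarrow> mgraph \<Rightarrow> mgraph" where
  "mult_graph k G = repeat_mset k G"

end

theory Submission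
  imports Defs "HOL-Combinatorics.Permutations"
begin

text \<open>Write \<open>G n\<close> for \<open>2\<langle>{1,2}\<rangle>\<^sub>n\<close>. Apart from three wrap-around edges at vertex \<open>0\<close>, \<open>G n\<close> is the
  doubled square of the path \<open>0, \<dots>, n - 1\<close>, so passing from \<open>G n\<close> to \<open>G (n + k)\<close> only changes a
  few edges near \<open>0\<close>. We maintain a decomposition of \<open>G n\<close> into finished cycles, one open cycle and
  three Hamilton cycles containing prescribed edges near \<open>0\<close>. Splicing new vertices into these
  cycles by rerouting short paths, the open cycle is either lengthened by one, or finished while a
  new triangle or digon is opened. Starting from six explicit configurations on \<open>5\<close>, \<open>6\<close> and \<open>7\<close>
  vertices this produces every list of parts \<open>\<ge> 2\<close> with sum \<open>n\<close> up to order, and the order of the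
  parts does not matter.\<close>

section \<open>Paths and cycles as edge multisets\<close>

fun path_edges :: "nat list \<Rightarrow> mgraph" where
  "path_edges (x # y # ys) = add_mset {x, y} (path_edges (y # ys))"
| "path_edges _ = {#}"

lemma path_edges_conv_nth:
  "path_edges xs = mset (map (\<lambda>i. {xs ! i, xs ! (i + 1)}) [0..<length xs - 1])"
proof (induction xs rule: path_edges.induct)
  case (1 x y ys)
  have "[0..<length (x # y # ys) - 1] = 0 # map Suc [0..<length (y # ys) - 1]"
    by (simp add: upt_conv_Cons map_Suc_upt del: upt_Suc)
  then show ?case using 1 by (simp add: comp_def)
qed auto

lemma cycle_edges_conv_path_edges:
  assumes "vs \<noteq> []"
  shows "cycle_edges vs = path_edges (vs @ [hd vs])"
proof -
  let ?L = "length vs" and ?ws = "vs @ [hd vs]"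
  have "path_edges ?ws = mset (map (\<lambda>i. {?ws ! i, ?ws ! (i + 1)}) [0..<?L])"
    by (simp add: path_edges_conv_nth)
  also have "map (\<lambda>i. {?ws ! i, ?ws ! (i + 1)}) [0..<?L]
      = map (\<lambda>i. {vs ! i, vs ! ((i + 1) mod ?L)}) [0..<?L]"
  proof (rule map_cong[OF refl])
    fix i assume "i \<in> set [0..<?L]"
    then consider "i + 1 < ?L" | "i + 1 = ?L" by fastforce
    then show "{?ws ! i, ?ws ! (i + 1)} = {vs ! i, vs ! ((i + 1) mod ?L)}"
      by cases (use assms in \<open>simp_all add: nth_append hd_conv_nth\<close>)
  qed
  finally show ?thesis by (simp add: cycle_edges_def)
qed

lemma path_edges_append:
  "xs \<noteq> [] \<Longrightarrow> ys \<noteq> [] \<Longrightarrow>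
    path_edges (xs @ ys) = path_edges xs + add_mset {last xs, hd ys} (path_edges ys)"
proof (induction xs)
  case (Cons x xs)
  then show ?case by (cases xs; cases ys) auto
qed simp

lemma path_edges_rev: "path_edges (rev xs) = path_edges xs"
proof (induction xs rule: path_edges.induct)
  case (1 x y ys)
  have "path_edges (rev (y # ys) @ [x]) = path_edges (rev (y # ys)) + {#{y, x}#}"
    by (subst path_edges_append) (auto simp: last_rev)
  then show ?case using 1 by (simp add: insert_commute)
qed auto

lemma cycle_edges_rotate1: "cycle_edges (rotate1 vs) = cycle_edges vs"
proof (cases vs)
  case (Cons x xs)
  show ?thesis
  proof (cases xs)
    case (Cons y ys)
    have "cycle_edges (rotate1 vs) = path_edges (xs @ [x, hd xs])"
      using \<open>vs = x # xs\<close> Cons by (simp add: cycle_edges_conv_path_edges)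
    also have "\<dots> = add_mset {x, hd xs} (path_edges xs + {#{last xs, x}#})"
      using Cons by (subst path_edges_append) auto
    also have "path_edges xs + {#{last xs, x}#} = path_edges (xs @ [x])"
      using Cons by (subst path_edges_append) auto
    finally show ?thesis using \<open>vs = x # xs\<close> Cons by (simp add: cycle_edges_conv_path_edges)
  qed (use Cons in simp)
qed simp

lemma cycle_edges_rotate: "cycle_edges (rotate k vs) = cycle_edges vs"
  by (induction k) (simp_all add: cycle_edges_rotate1)

lemma cycle_edges_Cons_rev: "cycle_edges (x # rev xs) = cycle_edges (x # xs)"
proof -
  have "path_edges (x # rev xs @ [x]) = path_edges (x # xs @ [x])"
    using path_edges_rev[of "x # xs @ [x]"] by simp
  then show ?thesis by (simp add: cycle_edges_conv_path_edges path_edges_rev)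
qed

lemma cycle_edges_subset: "e \<in># cycle_edges vs \<Longrightarrow> e \<subseteq> set vs"
proof -
  assume "e \<in># cycle_edges vs"
  then obtain i where i: "i < length vs" and e: "e = {vs ! i, vs ! ((i + 1) mod length vs)}"
    by (auto simp: cycle_edges_def)
  have "(i + 1) mod length vs < length vs" using i by (intro mod_less_divisor) auto
  then show ?thesis using e i by auto
qed

lemma cycle_edges_neighbour:
  assumes "distinct vs" "k < length vs" "{vs ! k, y} \<in># cycle_edges vs"
  shows "y = vs ! ((k + 1) mod length vs) \<or> y = vs ! ((k + length vs - 1) mod length vs)"
proof -
  let ?L = "length vs"
  from assms(3) obtain i where i: "i < ?L" and eq: "{vs ! k, y} = {vs ! i, vs ! ((i + 1) mod ?L)}"
    by (auto simp: cycle_edges_def)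
  have "(i + 1) mod ?L < ?L" using i by (intro mod_less_divisor) auto
  then consider "k = i" "y = vs ! ((i + 1) mod ?L)" | "k = (i + 1) mod ?L" "y = vs ! i"
    using eq assms(1,2) i by (auto simp: doubleton_eq_iff nth_eq_iff_index_eq)
  then show ?thesis
  proof cases
    case 2
    have "i = (k + ?L - 1) mod ?L"
    proof (cases "i + 1 < ?L")
      case False
      then have "i + 1 = ?L" using i by simp
      moreover from this have "k = 0" using 2(1) by simp
      ultimately show ?thesis by simp
    qed (use 2(1) in simp)
    then show ?thesis using 2 by simp
  qed simp
qed

lemma cycle_extend_prefix:
  assumes ws: "distinct ws" "3 \<le> length ws" and q: "q \<noteq> []" "take (length q) ws = q"
    and y: "y \<notin> set q" "{last q, y} \<in># cycle_edges ws"
  obtains ws' where "distinct ws'" "length ws' = length ws" "set ws' = set ws"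
    "cycle_edges ws' = cycle_edges ws" "take (Suc (length q)) ws' = q @ [y]"
proof -
  let ?L = "length ws" and ?k = "length q - 1"
  have "y \<in> set ws" using cycle_edges_subset[OF y(2)] by simp
  then have short: "length q < ?L"
    using y(1) q(2) by (metis linorder_not_less take_all)
  have prefix: "\<And>i. i < length q \<Longrightarrow> ws ! i \<in> set q"
    using q(2) by (metis nth_mem nth_take)
  have "ws ! ?k = last q"
    using q by (metis diff_less last_conv_nth length_greater_0_conv less_one nth_take)
  then have "y = ws ! length q \<or> y = ws ! ((?k + ?L - 1) mod ?L)"
    using cycle_edges_neighbour[OF ws(1), of ?k y] y(2) q(1) short by simp
  then consider "y = ws ! length q" | "length q = 1" "y = ws ! (?L - 1)"
  proof (elim disjE)
    assume pred: "y = ws ! ((?k + ?L - 1) mod ?L)"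
    show thesis
    proof (cases "?k = 0")
      case False
      have e: "?k + ?L - 1 = (?k - 1) + ?L" using False by linarith
      have "y = ws ! (?k - 1)" using pred short unfolding e by simp
      then show ?thesis using prefix[of "?k - 1"] y(1) q(1) by simp
    qed (use pred q(1) short that(2) in \<open>simp add: Suc_leI le_antisym\<close>)
  qed
  then show ?thesis
  proof cases
    case 1
    then show ?thesis using that[of ws] ws q short by (simp add: take_Suc_conv_app_nth)
  next
    case 2
    obtain x xs where x: "ws = x # xs" "xs \<noteq> []" using ws(2) by (cases ws) fastforce+
    have "q = [x]" using 2(1) q(2) x by (cases q) auto
    moreover have "y = last xs" using 2(2) x by (simp add: last_conv_nth)
    ultimately have "take (Suc (length q)) (x # rev xs) = q @ [y]"
      using x(2) by (cases "rev xs") auto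
    then show ?thesis using that[of "x # rev xs"] ws x by (simp add: cycle_edges_Cons_rev)
  qed
qed

lemma cycle_starting_with_path:
  assumes vs: "distinct vs" "3 \<le> length vs"
  shows "distinct p \<Longrightarrow> p \<noteq> [] \<Longrightarrow> hd p \<in> set vs \<Longrightarrow>
    set_mset (path_edges p) \<subseteq> set_mset (cycle_edges vs) \<Longrightarrow>
    \<exists>ws. distinct ws \<and> length ws = length vs \<and> set ws = set vs \<and> cycle_edges ws = cycle_edges vs
      \<and> take (length p) ws = p"
proof (induction p rule: rev_induct)
  case (snoc y q)
  show ?case
  proof (cases "q = []")
    case True
    obtain j where j: "j < length vs" "vs ! j = y"
      using snoc.prems(3) True by (auto simp: in_set_conv_nth)
    then have "rotate j vs ! 0 = y" using vs(2) by (subst nth_rotate) auto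
    then have "take 1 (rotate j vs) = [y]"
      using vs(2) by (cases "rotate j vs") auto
    then show ?thesis using True vs by (intro exI[of _ "rotate j vs"]) (auto simp: cycle_edges_rotate)
  next
    case False
    have edges: "path_edges (q @ [y]) = path_edges q + {#{last q, y}#}"
      using False by (subst path_edges_append) auto
    obtain ws where "distinct ws" "length ws = length vs" "set ws = set vs"
      "cycle_edges ws = cycle_edges vs" "take (length q) ws = q"
      using snoc.IH snoc.prems False edges by auto
    moreover from this obtain ws' where "distinct ws'" "length ws' = length ws" "set ws' = set ws"
      "cycle_edges ws' = cycle_edges ws" "take (Suc (length q)) ws' = q @ [y]"
      using cycle_extend_prefix[of ws q y] snoc.prems edges vs False by auto
    ultimately show ?thesis by auto
  qed
qed simp

section \<open>Rerouting a cycle along a path\<close>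

lemma cycle_replace_path:
  assumes vs: "distinct vs" "3 \<le> length vs"
    and p: "distinct (u # P @ [w])" "set_mset (path_edges (u # P @ [w])) \<subseteq> set_mset (cycle_edges vs)"
    and q: "distinct (u # Q @ [w])" "set Q \<inter> set vs \<subseteq> set P"
  obtains ws where "distinct ws" "length ws + length P = length vs + length Q"
    "set ws = (set vs - set P) \<union> set Q"
    "cycle_edges ws + path_edges (u # P @ [w]) = cycle_edges vs + path_edges (u # Q @ [w])"
proof -
  let ?p = "u # P @ [w]" and ?q = "u # Q @ [w]"
  have "{u, hd (P @ [w])} \<in># path_edges ?p" by (cases "P @ [w]") auto
  then have "u \<in> set vs" using p(2) cycle_edges_subset by blast
  then obtain ws0 where ws0: "distinct ws0" "length ws0 = length vs" "set ws0 = set vs"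
      "cycle_edges ws0 = cycle_edges vs" "take (length ?p) ws0 = ?p"
    using cycle_starting_with_path[OF vs, of ?p] p by auto
  define R where "R = drop (length ?p) ws0"
  have ws0R: "ws0 = ?p @ R" using ws0(5) R_def by (metis append_take_drop_id)
  have R: "distinct R" "set ?p \<inter> set R = {}" "set vs = set ?p \<union> set R"
    using ws0(1,3) ws0R by auto
  have split: "cycle_edges ((u # S @ [w]) @ R) = path_edges (u # S @ [w]) + path_edges ([w] @ R @ [u])" for S
    using path_edges_append[of "u # S @ [w]" "R @ [u]"] by (cases R) (simp_all add: cycle_edges_conv_path_edges)
  have "cycle_edges (?q @ R) + path_edges ?p = cycle_edges ws0 + path_edges ?q"
    unfolding ws0R split by (simp add: add_ac)
  moreover have "distinct (?q @ R)" using q p R by auto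
  ultimately show ?thesis
    using that[of "?q @ R"] ws0(2,4) ws0R R p by auto
qed

lemma cycle_subdivide_edge:
  assumes "distinct vs" "3 \<le> length vs" "u \<noteq> w" "{u, w} \<in># cycle_edges vs" "x \<notin> set vs"
  obtains ws where "distinct ws" "length ws = Suc (length vs)" "set ws = insert x (set vs)"
    "cycle_edges ws + {#{u, w}#} = cycle_edges vs + {#{u, x}, {x, w}#}"
proof -
  have "u \<noteq> x" "w \<noteq> x" using assms(4,5) cycle_edges_subset by blast+
  then show ?thesis
    using cycle_replace_path[OF assms(1,2), of u "[]" w "[x]"] assms(3,4,5) that by auto
qed

lemma hd_butlast_tl_last: "2 \<le> length xs \<Longrightarrow> xs = hd xs # butlast (tl xs) @ [last xs]"
  by (cases xs) auto

lemma cycle_reroute: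
  assumes vs: "distinct vs" "set vs = V" "3 \<le> card V"
    and p: "distinct p" "2 \<le> length p" "set p \<subseteq> V" "set_mset (path_edges p) \<subseteq> set_mset (cycle_edges vs)"
    and q: "distinct q" "2 \<le> length q" "hd q = hd p" "last q = last p" "set q \<inter> V \<subseteq> set p"
  obtains ws where "distinct ws" "set ws = (V - set p) \<union> set q"
    "cycle_edges ws + path_edges p = cycle_edges vs + path_edges q"
proof -
  obtain u P w where p': "p = u # P @ [w]" using hd_butlast_tl_last[OF p(2)] by blast
  obtain Q where q': "q = u # Q @ [w]" using hd_butlast_tl_last[OF q(2)] q(3,4) p' by force
  have "3 \<le> length vs" using vs distinct_card by metis
  moreover have "set Q \<inter> set vs \<subseteq> set P" using q(1,5) vs(2) p' q' by auto
  ultimately obtain ws where "distinct ws" "set ws = (set vs - set P) \<union> set Q"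
      "cycle_edges ws + path_edges p = cycle_edges vs + path_edges q"
    using cycle_replace_path[OF vs(1)] p q p' q' by blast
  then show ?thesis using that[of ws] p' q' p(1,3) vs(2) by auto
qed

lemma cycle_replace_vertex:
  assumes vs: "distinct vs" "3 \<le> length vs" and y: "y \<notin> set vs" and uxw: "distinct [u, x, w]"
    and edges: "{u, x} \<in># cycle_edges vs" "{x, w} \<in># cycle_edges vs"
  obtains ws where "distinct ws" "length ws = length vs"
    "cycle_edges ws + path_edges [u, x, w] = cycle_edges vs + path_edges [u, y, w]"
proof -
  have sub: "{u, x, w} \<subseteq> set vs" using edges cycle_edges_subset by blast
  have "3 \<le> card (set vs)" using vs distinct_card by metis
  then obtain ws where ws: "distinct ws" "set ws = (set vs - set [u, x, w]) \<union> set [u, y, w]"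
      "cycle_edges ws + path_edges [u, x, w] = cycle_edges vs + path_edges [u, y, w]"
    by (rule cycle_reroute[OF vs(1) refl _ _ _ _ _ _ _ _ _, where p = "[u, x, w]" and q = "[u, y, w]"])
      (use uxw y sub edges in \<open>auto simp: insert_commute\<close>)
  have "set ws = insert y (set vs - {x})" "y \<notin> set vs - {x}" using ws(2) sub uxw y by auto
  then have "card (set ws) = card (set vs)"
    using sub card.remove[of "set vs" x] by (simp add: card_insert_disjoint)
  then show ?thesis using that ws vs(1) distinct_card by metis
qed

section \<open>The doubled circulant\<close>

definition path_square :: "nat \<Rightarrow> mgraph" where
  "path_square n = image_mset (\<lambda>i. {i, i + 1}) (mset_set {..<n - 1})
     + image_mset (\<lambda>i. {i, i + 2}) (mset_set {..<n - 2})"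

definition closing_edges :: "nat \<Rightarrow> mgraph" where
  "closing_edges n = {#{n - 1, 0}, {n - 2, 0}, {n - 1, 1}#}"

definition double_circ :: "nat \<Rightarrow> mgraph" where
  "double_circ n = path_square n + path_square n + closing_edges n + closing_edges n"

lemma path_square_Suc:
  assumes "2 \<le> k"
  shows "path_square (Suc k) = path_square k + {#{k - 1, k}, {k - 2, k}#}"
proof -
  obtain j where "k = Suc (Suc j)" using assms by (metis add_2_eq_Suc le_Suc_ex)
  then show ?thesis by (simp add: path_square_def lessThan_Suc)
qed

lemma path_square_Suc_Suc:
  "2 \<le> n \<Longrightarrow> path_square (Suc (Suc n)) = path_square n + {#{n - 1, n}, {n - 2, n}, {n, n + 1}, {n - 1, n + 1}#}"
  using path_square_Suc[of n] path_square_Suc[of "Suc n"] by (simp add: add_mset_commute)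

lemma path_square_add3:
  "2 \<le> n \<Longrightarrow> path_square (n + 3) =
     path_square n + {#{n - 1, n}, {n - 2, n}, {n, n + 1}, {n - 1, n + 1}, {n + 1, n + 2}, {n, n + 2}#}"
  using path_square_Suc_Suc[of n] path_square_Suc[of "Suc (Suc n)"]
  by (simp add: add_mset_commute numeral_3_eq_3)

lemma circulant_12_edges:
  assumes n: "5 \<le> n"
  shows "{{i, j} | i j. i < n \<and> j < n \<and> i \<noteq> j \<and> cdist n i j \<in> {1, 2}}
       = (\<lambda>i. {i, i + 1}) ` {..<n - 1} \<union> (\<lambda>i. {i, i + 2}) ` {..<n - 2} \<union> set_mset (closing_edges n)"
    (is "?S = ?R")
proof
  have ordered: "{a, b} \<in> ?R" if ab: "a < b" "b < n" "min (b - a) (n - (b - a)) \<in> {1, 2}" for a b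
  proof -
    consider "b - a = 1" | "b - a = 2" | "n - (b - a) = 1" | "n - (b - a) = 2"
      using ab(3) by (auto simp: min_def split: if_splits)
    then show ?thesis
    proof cases
      case 1
      then have "b = a + 1" "a < n - 1" using ab by linarith+
      then show ?thesis by (intro UnI1 image_eqI[where x = a]) auto
    next
      case 2
      then have "b = a + 2" "a < n - 2" using ab by linarith+
      then show ?thesis by (intro UnI1 UnI2 image_eqI[where x = a]) auto
    next
      case 3
      then have "a = 0" "b = n - 1" using ab by linarith+
      then show ?thesis by (simp add: closing_edges_def insert_commute)
    next
      case 4
      then have "a = 0 \<and> b = n - 2 \<or> a = 1 \<and> b = n - 1" using ab by linarith
      then show ?thesis by (auto simp: closing_edges_def insert_commute)
    qed
  qed
  show "?S \<subseteq> ?R"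
  proof
    fix e assume "e \<in> ?S"
    then obtain i j where e: "e = {i, j}" and ij: "i < n" "j < n" "i \<noteq> j" "cdist n i j \<in> {1, 2}"
      by blast
    show "e \<in> ?R"
    proof (cases "i < j")
      case True
      then show ?thesis using ordered[of i j] ij e by (simp add: cdist_def)
    next
      case False
      then show ?thesis using ordered[of j i] ij e by (simp add: cdist_def insert_commute)
    qed
  qed
next
  have mem: "{i, j} \<in> ?S" if "i < n" "j < n" "i \<noteq> j" "cdist n i j \<in> {1, 2}" for i j
    using that by blast
  show "?R \<subseteq> ?S"
  proof
    fix e assume "e \<in> ?R"
    then consider (short) i where "i < n - 1" "e = {i, i + 1}" | (long) i where "i < n - 2" "e = {i, i + 2}"
      | (closing) "e \<in># closing_edges n" by blast
    then show "e \<in> ?S"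
    proof cases
      case (short i)
      show ?thesis unfolding short(2) by (rule mem) (use short n in \<open>simp_all add: cdist_def\<close>)
    next
      case (long i)
      show ?thesis unfolding long(2) by (rule mem) (use long n in \<open>simp_all add: cdist_def\<close>)
    next
      case closing
      have "{n - 1, 0} \<in> ?S" "{n - 2, 0} \<in> ?S" "{n - 1, 1} \<in> ?S"
        by (rule mem; use n in \<open>simp_all add: cdist_def\<close>)+
      moreover have "e \<in> {{n - 1, 0}, {n - 2, 0}, {n - 1, 1}}"
        using closing by (simp add: closing_edges_def)
      ultimately show ?thesis by blast
    qed
  qed
qed

lemma mult_graph_circulant_12:
  assumes n: "5 \<le> n"
  shows "mult_graph 2 (circulant {1, 2} n) = double_circ n"
proof -
  let ?sh = "(\<lambda>i. {i, i + 1}) ` {..<n - 1}" and ?lo = "(\<lambda>i. {i, i + 2}) ` {..<n - 2}"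
  have inj: "inj_on (\<lambda>i. {i, i + 1}) {..<n - 1}" "inj_on (\<lambda>i::nat. {i, i + 2}) {..<n - 2}"
    by (auto simp: inj_on_def doubleton_eq_iff)
  have disj: "?sh \<inter> ?lo = {}" "(?sh \<union> ?lo) \<inter> set_mset (closing_edges n) = {}"
    using n by (auto simp: closing_edges_def doubleton_eq_iff)
  have "mset_set (set_mset (closing_edges n)) = closing_edges n"
    using n by (auto simp: closing_edges_def doubleton_eq_iff)
  then have "circulant {1, 2} n = mset_set ?sh + mset_set ?lo + closing_edges n"
    unfolding circulant_def circulant_12_edges[OF n]
    using disj by (simp add: mset_set_Union)
  also have "\<dots> = path_square n + closing_edges n"
    unfolding path_square_def image_mset_mset_set[OF inj(1)] image_mset_mset_set[OF inj(2)] ..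
  finally show ?thesis by (simp add: mult_graph_def double_circ_def numeral_2_eq_2 add_ac)
qed

section \<open>Configurations and extension steps\<close>

definition hamiltonian :: "nat \<Rightarrow> nat list \<Rightarrow> bool" where
  "hamiltonian n vs \<longleftrightarrow> distinct vs \<and> set vs = {..<n}"

definition cycle_list :: "nat list \<Rightarrow> mgraph list \<Rightarrow> bool" where
  "cycle_list Ms Fs \<longleftrightarrow> length Fs = length Ms \<and> (\<forall>i<length Ms. is_cycle (Ms ! i) (Fs ! i))"

lemma hamiltonian_length: "hamiltonian n vs \<Longrightarrow> length vs = n"
  unfolding hamiltonian_def using distinct_card by fastforce

lemma is_cycle_cycle_edges: "distinct vs \<Longrightarrow> length vs = m \<Longrightarrow> 2 \<le> m \<Longrightarrow> is_cycle m (cycle_edges vs)"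
  unfolding is_cycle_def by blast

lemma cycle_list_snoc: "cycle_list Ms Fs \<Longrightarrow> is_cycle m F \<Longrightarrow> cycle_list (Ms @ [m]) (Fs @ [F])"
  unfolding cycle_list_def by (auto simp: nth_append)

lemma cycle_list_cycles:
  "map length vss = Ms \<Longrightarrow> \<forall>vs\<in>set vss. distinct vs \<and> 2 \<le> length vs \<Longrightarrow> cycle_list Ms (map cycle_edges vss)"
  unfolding cycle_list_def by (auto intro!: is_cycle_cycle_edges)

lemma has_cycle_decompI: "cycle_list Ms Fs \<Longrightarrow> sum_list Fs = G \<Longrightarrow> has_cycle_decomp Ms G"
  unfolding cycle_list_def has_cycle_decomp_def by auto

text \<open>Besides the finished cycles \<open>Fs\<close>, a configuration has an open cycle (through \<open>n - 2, 0, n - 1\<close>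
  for \<open>P_config\<close>, the digon on \<open>{n - 1, 0}\<close> for \<open>Q_config\<close>) and three Hamilton cycles. The listed
  edges are exactly those that the extension steps below reroute through the new vertices.\<close>

definition P_config :: "nat \<Rightarrow> nat list \<Rightarrow> mgraph list \<Rightarrow> nat list \<Rightarrow> nat list \<Rightarrow> nat list \<Rightarrow> nat list \<Rightarrow> bool" where
  "P_config n Ms Fs vC va vb vc \<longleftrightarrow> 5 \<le> n \<and> cycle_list Ms Fs \<and>
     distinct vC \<and> 3 \<le> length vC \<and> set vC \<subseteq> {..<n} \<and>
     hamiltonian n va \<and> hamiltonian n vb \<and> hamiltonian n vc \<and>
     sum_list Fs + cycle_edges vC + cycle_edges va + cycle_edges vb + cycle_edges vc = double_circ n \<and>
     {n - 2, 0} \<in># cycle_edges vC \<and> {n - 1, 0} \<in># cycle_edges vC \<and>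
     {n - 2, 0} \<in># cycle_edges va \<and> {n - 1, 0} \<in># cycle_edges va \<and> {1, 2} \<in># cycle_edges va \<and>
     {n - 1, 1} \<in># cycle_edges vb \<and> {0, 1} \<in># cycle_edges vb \<and> {0, 2} \<in># cycle_edges vb \<and>
     {n - 2, n - 1} \<in># cycle_edges vb \<and>
     {n - 1, 1} \<in># cycle_edges vc \<and> {0, 1} \<in># cycle_edges vc \<and> {0, 2} \<in># cycle_edges vc"

definition Q_config :: "nat \<Rightarrow> nat list \<Rightarrow> mgraph list \<Rightarrow> nat list \<Rightarrow> nat list \<Rightarrow> nat list \<Rightarrow> bool" where
  "Q_config n Ms Fs vx vy vz \<longleftrightarrow> 5 \<le> n \<and> cycle_list Ms Fs \<and>
     hamiltonian n vx \<and> hamiltonian n vy \<and> hamiltonian n vz \<and>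
     sum_list Fs + cycle_edges [n - 1, 0] + cycle_edges vx + cycle_edges vy + cycle_edges vz = double_circ n \<and>
     {n - 2, 0} \<in># cycle_edges vx \<and> {n - 1, 1} \<in># cycle_edges vx \<and> {0, 2} \<in># cycle_edges vx \<and>
     {n - 2, 0} \<in># cycle_edges vy \<and> {0, 1} \<in># cycle_edges vy \<and> {1, 2} \<in># cycle_edges vy \<and>
     {n - 1, 1} \<in># cycle_edges vz \<and> {0, 1} \<in># cycle_edges vz \<and> {0, 2} \<in># cycle_edges vz"

lemma sum_after_replacements:
  fixes S :: mgraph
  assumes "S + C + a + b + c = E"
    "C' + X1 = C + Y1" "a' + X2 = a + Y2" "b' + X3 = b + Y3" "c' + X4 = c + Y4"
    "E' + (X1 + X2 + X3 + X4) = E + (Y1 + Y2 + Y3 + Y4) + N"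
  shows "S + C' + a' + b' + c' + N = E'"
proof -
  have "S + C' + a' + b' + c' + N + (X1 + X2 + X3 + X4)
      = S + (C' + X1) + (a' + X2) + (b' + X3) + (c' + X4) + N"
    by (simp add: ac_simps)
  also have "\<dots> = (S + C + a + b + c) + (Y1 + Y2 + Y3 + Y4) + N"
    using assms(2-5) by (simp add: ac_simps)
  also have "\<dots> = E' + (X1 + X2 + X3 + X4)"
    using assms(1,6) by simp
  finally show ?thesis by simp
qed

lemma mem_after_replacement:
  fixes A :: mgraph
  assumes "A' + X = A + Y" "(e \<in># A \<and> count X e \<le> count Y e) \<or> count X e < count Y e"
  shows "e \<in># A'"
proof -
  have "count A' e + count X e = count A e + count Y e"
    using arg_cong[OF assms(1), of "\<lambda>M. count M e"] by simp
  then show ?thesis using assms(2) by (auto simp flip: count_greater_zero_iff)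
qed

lemma replacement_trans:
  fixes a :: mgraph
  assumes "a1 + X = a + Y" "a2 + X' = a1 + Y'"
  shows "a2 + (X + X') = a + (Y + Y')"
proof -
  have "a2 + (X + X') = (a2 + X') + X" by (simp add: add_ac)
  also have "\<dots> = a + (Y + Y')" using assms by (simp add: add_ac)
  finally show ?thesis .
qed

lemma lessThan_add2: "{..<(n::nat) + 2} = {..<n} \<union> {n, n + 1}"
  by auto

lemma lessThan_add3: "{..<(n::nat) + 3} = {..<n} \<union> {n, n + 1, n + 2}"
  by auto

lemma double_circ_Suc_subdivided:
  "5 \<le> n \<Longrightarrow> double_circ (Suc n) + ({#{n - 2, 0}#} + {#{n - 2, 0}#} + {#{n - 1, 1}#} + {#{n - 1, 1}#})
    = double_circ n + ({#{n - 2, n}, {n, 0}#} + {#{n - 2, n}, {n, 0}#}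
        + {#{n - 1, n}, {n, 1}#} + {#{n - 1, n}, {n, 1}#})"
  by (simp add: double_circ_def path_square_Suc closing_edges_def)

lemma double_circ_add_triangle:
  "5 \<le> n \<Longrightarrow> double_circ (n + 3) + (path_edges [n - 2, 0, n - 1] + path_edges [n - 2, 0, n - 1]
      + path_edges [n - 1, 1] + path_edges [n - 1, 1])
    = double_circ n + (path_edges [n - 2, n, n - 1] + path_edges [n - 2, n, n + 2, 0, n + 1, n - 1]
      + path_edges [n - 1, n + 1, n, n + 2, 1] + path_edges [n - 1, n, n + 1, n + 2, 1])
      + cycle_edges [n + 1, 0, n + 2]"
  by (simp add: double_circ_def path_square_add3 closing_edges_def cycle_edges_conv_path_edges)
    (simp add: insert_commute add_mset_commute)

lemma double_circ_add_digon_from_P: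
  "5 \<le> n \<Longrightarrow> double_circ (n + 2) + (path_edges [n - 2, 0, n - 1]
      + (path_edges [n - 2, 0, n - 1] + path_edges [2, 1])
      + path_edges [n - 2, n - 1, 1] + path_edges [n - 1, 1, 0, 2])
    = double_circ n + (path_edges [n - 2, n, n - 1]
      + (path_edges [n - 2, n - 1] + path_edges [2, 0, n, n + 1, 1])
      + path_edges [n - 2, n, n - 1, n + 1, 1] + path_edges [n - 1, n + 1, n, 0, 1, 2])
      + cycle_edges [n + 1, 0]"
  by (simp add: double_circ_def path_square_Suc_Suc closing_edges_def cycle_edges_conv_path_edges)
    (simp add: insert_commute add_mset_commute)

lemma double_circ_add_digon_from_Q:
  "5 \<le> n \<Longrightarrow> double_circ (n + 2) + (cycle_edges [n - 1, 0] + ({#{n - 2, 0}#} + {#{n - 1, 1}#})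
      + path_edges [n - 2, 0, 1, 2] + path_edges [n - 1, 1, 0, 2])
    = double_circ n + (cycle_edges [n - 1, n] + ({#{n - 2, n}, {n, 0}#} + {#{n - 1, n + 1}, {n + 1, 1}#})
      + path_edges [n - 2, n, n + 1, 1, 0, 2] + path_edges [n - 1, n + 1, n, 0, 1, 2])
      + cycle_edges [n + 1, 0]"
  by (simp add: double_circ_def path_square_Suc_Suc closing_edges_def cycle_edges_conv_path_edges)
    (simp add: insert_commute add_mset_commute)

lemma P_config_grow:
  assumes "P_config n Ms Fs vC va vb vc"
  obtains vC' va' vb' vc' where "P_config (Suc n) Ms Fs vC' va' vb' vc'" "length vC' = Suc (length vC)"
proof -
  from assms have n: "5 \<le> n" and Fs: "cycle_list Ms Fs"
    and vC: "distinct vC" "3 \<le> length vC" "set vC \<subseteq> {..<n}"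
    and ham: "hamiltonian n va" "hamiltonian n vb" "hamiltonian n vc"
    and sum: "sum_list Fs + cycle_edges vC + cycle_edges va + cycle_edges vb + cycle_edges vc = double_circ n"
    and f: "{n - 2, 0} \<in># cycle_edges vC" "{n - 1, 0} \<in># cycle_edges vC"
      "{n - 2, 0} \<in># cycle_edges va" "{n - 1, 0} \<in># cycle_edges va" "{1, 2} \<in># cycle_edges va"
      "{n - 1, 1} \<in># cycle_edges vb" "{0, 1} \<in># cycle_edges vb" "{0, 2} \<in># cycle_edges vb"
      "{n - 2, n - 1} \<in># cycle_edges vb"
      "{n - 1, 1} \<in># cycle_edges vc" "{0, 1} \<in># cycle_edges vc" "{0, 2} \<in># cycle_edges vc"
    unfolding P_config_def by blast+
  have ham': "distinct va" "length va = n" "set va = {..<n}" "distinct vb" "length vb = n" "set vb = {..<n}"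
    "distinct vc" "length vc = n" "set vc = {..<n}"
    using ham hamiltonian_length unfolding hamiltonian_def by blast+
  obtain wC where wC: "distinct wC" "length wC = Suc (length vC)" "set wC = insert n (set vC)"
      "cycle_edges wC + {#{n - 2, 0}#} = cycle_edges vC + {#{n - 2, n}, {n, 0}#}"
    by (rule cycle_subdivide_edge[OF vC(1,2) _ f(1), where x = n]) (use n vC(3) in auto)
  obtain wa where wa: "distinct wa" "set wa = insert n {..<n}"
      "cycle_edges wa + {#{n - 2, 0}#} = cycle_edges va + {#{n - 2, n}, {n, 0}#}"
    by (rule cycle_subdivide_edge[OF ham'(1) _ _ f(3), where x = n]) (use n ham' in auto)
  obtain wb where wb: "distinct wb" "set wb = insert n {..<n}"
      "cycle_edges wb + {#{n - 1, 1}#} = cycle_edges vb + {#{n - 1, n}, {n, 1}#}"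
    by (rule cycle_subdivide_edge[OF ham'(4) _ _ f(6), where x = n]) (use n ham' in auto)
  obtain wc where wc: "distinct wc" "set wc = insert n {..<n}"
      "cycle_edges wc + {#{n - 1, 1}#} = cycle_edges vc + {#{n - 1, n}, {n, 1}#}"
    by (rule cycle_subdivide_edge[OF ham'(7) _ _ f(10), where x = n]) (use n ham' in auto)
  have "sum_list Fs + cycle_edges wC + cycle_edges wa + cycle_edges wb + cycle_edges wc + {#} = double_circ (Suc n)"
    by (rule sum_after_replacements[OF sum wC(4) wa(3) wb(3) wc(3)]) (use double_circ_Suc_subdivided n in simp)
  moreover have "hamiltonian (Suc n) wa" "hamiltonian (Suc n) wb" "hamiltonian (Suc n) wc"
    using wa wb wc by (auto simp: hamiltonian_def lessThan_Suc)
  moreover have "{Suc n - 2, 0} \<in># cycle_edges wC" "{Suc n - 1, 0} \<in># cycle_edges wC"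
    "{Suc n - 2, 0} \<in># cycle_edges wa" "{Suc n - 1, 0} \<in># cycle_edges wa" "{1, 2} \<in># cycle_edges wa"
    "{Suc n - 1, 1} \<in># cycle_edges wb" "{0, 1} \<in># cycle_edges wb" "{0, 2} \<in># cycle_edges wb"
    "{Suc n - 2, Suc n - 1} \<in># cycle_edges wb"
    "{Suc n - 1, 1} \<in># cycle_edges wc" "{0, 1} \<in># cycle_edges wc" "{0, 2} \<in># cycle_edges wc"
    by (rule mem_after_replacement[OF wC(4)] mem_after_replacement[OF wa(3)]
        mem_after_replacement[OF wb(3)] mem_after_replacement[OF wc(3)];
        use f n in \<open>auto simp: doubleton_eq_iff\<close>)+
  moreover have "5 \<le> Suc n" "3 \<le> length wC" "set wC \<subseteq> {..<Suc n}" using n vC wC by auto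
  ultimately show ?thesis using that[of wC wa wb wc] Fs wC(1,2) unfolding P_config_def by auto
qed

lemma P_config_add_triangle:
  assumes "P_config n Ms Fs vC va vb vc"
  obtains F vC' va' vb' vc' where "P_config (n + 3) (Ms @ [length vC]) (Fs @ [F]) vC' va' vb' vc'"
    "length vC' = 3"
proof -
  from assms have n: "5 \<le> n" and Fs: "cycle_list Ms Fs"
    and vC: "distinct vC" "3 \<le> length vC" "set vC \<subseteq> {..<n}"
    and ham: "hamiltonian n va" "hamiltonian n vb" "hamiltonian n vc"
    and sum: "sum_list Fs + cycle_edges vC + cycle_edges va + cycle_edges vb + cycle_edges vc = double_circ n"
    and f: "{n - 2, 0} \<in># cycle_edges vC" "{n - 1, 0} \<in># cycle_edges vC"
      "{n - 2, 0} \<in># cycle_edges va" "{n - 1, 0} \<in># cycle_edges va" "{1, 2} \<in># cycle_edges va"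
      "{n - 1, 1} \<in># cycle_edges vb" "{0, 1} \<in># cycle_edges vb" "{0, 2} \<in># cycle_edges vb"
      "{n - 2, n - 1} \<in># cycle_edges vb"
      "{n - 1, 1} \<in># cycle_edges vc" "{0, 1} \<in># cycle_edges vc" "{0, 2} \<in># cycle_edges vc"
    unfolding P_config_def by blast+
  have ham': "distinct va" "set va = {..<n}" "distinct vb" "set vb = {..<n}" "distinct vc" "set vc = {..<n}"
    using ham unfolding hamiltonian_def by blast+
  obtain wC where wC: "distinct wC" "length wC = length vC"
      "cycle_edges wC + path_edges [n - 2, 0, n - 1] = cycle_edges vC + path_edges [n - 2, n, n - 1]"
    by (rule cycle_replace_vertex[OF vC(1,2), where u = "n - 2" and x = 0 and w = "n - 1" and y = n]) (use n vC(3) f(1,2) in \<open>auto simp: insert_commute\<close>)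
  obtain wa where wa: "distinct wa"
      "set wa = ({..<n} - set [n - 2, 0, n - 1]) \<union> set [n - 2, n, n + 2, 0, n + 1, n - 1]"
      "cycle_edges wa + path_edges [n - 2, 0, n - 1]
        = cycle_edges va + path_edges [n - 2, n, n + 2, 0, n + 1, n - 1]"
    by (rule cycle_reroute[OF ham'(1,2), where p = "[n - 2, 0, n - 1]" and q = "[n - 2, n, n + 2, 0, n + 1, n - 1]"])
      (use n f in \<open>auto simp: insert_commute\<close>)
  obtain wb where wb: "distinct wb" "set wb = ({..<n} - set [n - 1, 1]) \<union> set [n - 1, n + 1, n, n + 2, 1]"
      "cycle_edges wb + path_edges [n - 1, 1] = cycle_edges vb + path_edges [n - 1, n + 1, n, n + 2, 1]"
    by (rule cycle_reroute[OF ham'(3,4), where p = "[n - 1, 1]" and q = "[n - 1, n + 1, n, n + 2, 1]"])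
      (use n f in auto)
  obtain wc where wc: "distinct wc" "set wc = ({..<n} - set [n - 1, 1]) \<union> set [n - 1, n, n + 1, n + 2, 1]"
      "cycle_edges wc + path_edges [n - 1, 1] = cycle_edges vc + path_edges [n - 1, n, n + 1, n + 2, 1]"
    by (rule cycle_reroute[OF ham'(5,6), where p = "[n - 1, 1]" and q = "[n - 1, n, n + 1, n + 2, 1]"])
      (use n f in auto)
  from sum_after_replacements[OF sum wC(3) wa(3) wb(3) wc(3) double_circ_add_triangle[OF n]]
  have "sum_list (Fs @ [cycle_edges wC]) + cycle_edges [n + 1, 0, n + 2] + cycle_edges wa + cycle_edges wc
      + cycle_edges wb = double_circ (n + 3)"
    by (simp add: add_ac)
  moreover have "cycle_list (Ms @ [length vC]) (Fs @ [cycle_edges wC])"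
    using cycle_list_snoc[OF Fs] is_cycle_cycle_edges wC(1,2) vC(2) by simp
  moreover have "hamiltonian (n + 3) wa" "hamiltonian (n + 3) wb" "hamiltonian (n + 3) wc"
    using wa wb wc n unfolding hamiltonian_def lessThan_add3 by auto
  moreover have
    "{n + 3 - 2, 0} \<in># cycle_edges wa" "{n + 3 - 1, 0} \<in># cycle_edges wa" "{1, 2} \<in># cycle_edges wa"
    "{n + 3 - 1, 1} \<in># cycle_edges wc" "{0, 1} \<in># cycle_edges wc" "{0, 2} \<in># cycle_edges wc"
    "{n + 3 - 2, n + 3 - 1} \<in># cycle_edges wc"
    "{n + 3 - 1, 1} \<in># cycle_edges wb" "{0, 1} \<in># cycle_edges wb" "{0, 2} \<in># cycle_edges wb"
    by (rule mem_after_replacement[OF wa(3)] mem_after_replacement[OF wb(3)] mem_after_replacement[OF wc(3)];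
        use f n in \<open>auto simp: doubleton_eq_iff\<close>)+
  moreover have "{n + 3 - 2, 0} \<in># cycle_edges [n + 1, 0, n + 2]" "{n + 3 - 1, 0} \<in># cycle_edges [n + 1, 0, n + 2]"
    by (simp_all add: cycle_edges_conv_path_edges insert_commute)
  ultimately show ?thesis
    using that[of "cycle_edges wC" "[n + 1, 0, n + 2]" wa wc wb] n unfolding P_config_def by auto
qed

lemma P_config_add_digon:
  assumes "P_config n Ms Fs vC va vb vc"
  obtains F vx vy vz where "Q_config (n + 2) (Ms @ [length vC]) (Fs @ [F]) vx vy vz"
proof -
  from assms have n: "5 \<le> n" and Fs: "cycle_list Ms Fs"
    and vC: "distinct vC" "3 \<le> length vC" "set vC \<subseteq> {..<n}"
    and ham: "hamiltonian n va" "hamiltonian n vb" "hamiltonian n vc"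
    and sum: "sum_list Fs + cycle_edges vC + cycle_edges va + cycle_edges vb + cycle_edges vc = double_circ n"
    and f: "{n - 2, 0} \<in># cycle_edges vC" "{n - 1, 0} \<in># cycle_edges vC"
      "{n - 2, 0} \<in># cycle_edges va" "{n - 1, 0} \<in># cycle_edges va" "{1, 2} \<in># cycle_edges va"
      "{n - 1, 1} \<in># cycle_edges vb" "{0, 1} \<in># cycle_edges vb" "{0, 2} \<in># cycle_edges vb"
      "{n - 2, n - 1} \<in># cycle_edges vb"
      "{n - 1, 1} \<in># cycle_edges vc" "{0, 1} \<in># cycle_edges vc" "{0, 2} \<in># cycle_edges vc"
    unfolding P_config_def by blast+
  have ham': "distinct va" "set va = {..<n}" "distinct vb" "set vb = {..<n}" "distinct vc" "set vc = {..<n}"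
    using ham unfolding hamiltonian_def by blast+
  obtain wC where wC: "distinct wC" "length wC = length vC"
      "cycle_edges wC + path_edges [n - 2, 0, n - 1] = cycle_edges vC + path_edges [n - 2, n, n - 1]"
    by (rule cycle_replace_vertex[OF vC(1,2), where u = "n - 2" and x = 0 and w = "n - 1" and y = n]) (use n vC(3) f(1,2) in \<open>auto simp: insert_commute\<close>)
  obtain wa1 where wa1: "distinct wa1" "set wa1 = ({..<n} - set [n - 2, 0, n - 1]) \<union> set [n - 2, n - 1]"
      "cycle_edges wa1 + path_edges [n - 2, 0, n - 1] = cycle_edges va + path_edges [n - 2, n - 1]"
    by (rule cycle_reroute[OF ham'(1,2), where p = "[n - 2, 0, n - 1]" and q = "[n - 2, n - 1]"])
      (use n f in \<open>auto simp: insert_commute\<close>)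
  have e: "{2, 1} \<in># cycle_edges wa1"
    by (rule mem_after_replacement[OF wa1(3)]) (use f n in \<open>auto simp: doubleton_eq_iff insert_commute\<close>)
  have V: "set wa1 = {..<n} - {0}" "3 \<le> card ({..<n} - {0})" using wa1(2) n by auto
  obtain wa where wa: "distinct wa" "set wa = ({..<n} - {0} - set [2, 1]) \<union> set [2, 0, n, n + 1, 1]"
      "cycle_edges wa + path_edges [2, 1] = cycle_edges wa1 + path_edges [2, 0, n, n + 1, 1]"
    by (rule cycle_reroute[OF wa1(1) V, where p = "[2, 1]" and q = "[2, 0, n, n + 1, 1]"]) (use e n in auto)
  note wa' = replacement_trans[OF wa1(3) wa(3)]
  obtain wb where wb: "distinct wb"
      "set wb = ({..<n} - set [n - 2, n - 1, 1]) \<union> set [n - 2, n, n - 1, n + 1, 1]"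
      "cycle_edges wb + path_edges [n - 2, n - 1, 1] = cycle_edges vb + path_edges [n - 2, n, n - 1, n + 1, 1]"
    by (rule cycle_reroute[OF ham'(3,4), where p = "[n - 2, n - 1, 1]" and q = "[n - 2, n, n - 1, n + 1, 1]"])
      (use n f in \<open>auto simp: insert_commute\<close>)
  obtain wc where wc: "distinct wc"
      "set wc = ({..<n} - set [n - 1, 1, 0, 2]) \<union> set [n - 1, n + 1, n, 0, 1, 2]"
      "cycle_edges wc + path_edges [n - 1, 1, 0, 2] = cycle_edges vc + path_edges [n - 1, n + 1, n, 0, 1, 2]"
    by (rule cycle_reroute[OF ham'(5,6), where p = "[n - 1, 1, 0, 2]" and q = "[n - 1, n + 1, n, 0, 1, 2]"])
      (use n f in \<open>auto simp: insert_commute\<close>)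
  from sum_after_replacements[OF sum wC(3) wa' wb(3) wc(3) double_circ_add_digon_from_P[OF n]]
  have "sum_list (Fs @ [cycle_edges wC]) + cycle_edges [n + 2 - 1, 0] + cycle_edges wa + cycle_edges wc
      + cycle_edges wb = double_circ (n + 2)"
    by (simp add: add_ac)
  moreover have "cycle_list (Ms @ [length vC]) (Fs @ [cycle_edges wC])"
    using cycle_list_snoc[OF Fs] is_cycle_cycle_edges wC(1,2) vC(2) by simp
  moreover have "hamiltonian (n + 2) wa" "hamiltonian (n + 2) wb" "hamiltonian (n + 2) wc"
    using wa wb wc n unfolding hamiltonian_def lessThan_add2 by auto
  moreover have
    "{n + 2 - 2, 0} \<in># cycle_edges wa" "{n + 2 - 1, 1} \<in># cycle_edges wa" "{0, 2} \<in># cycle_edges wa"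
    "{n + 2 - 2, 0} \<in># cycle_edges wc" "{0, 1} \<in># cycle_edges wc" "{1, 2} \<in># cycle_edges wc"
    "{n + 2 - 1, 1} \<in># cycle_edges wb" "{0, 1} \<in># cycle_edges wb" "{0, 2} \<in># cycle_edges wb"
    by (rule mem_after_replacement[OF wa'] mem_after_replacement[OF wb(3)] mem_after_replacement[OF wc(3)];
        use f n in \<open>auto simp: doubleton_eq_iff\<close>)+
  ultimately show ?thesis
    using that[of "cycle_edges wC" wa wc wb] n unfolding Q_config_def by auto
qed

lemma Q_config_add_digon:
  assumes "Q_config n Ms Fs vx vy vz"
  obtains F vx' vy' vz' where "Q_config (n + 2) (Ms @ [2]) (Fs @ [F]) vx' vy' vz'"
proof -
  from assms have n: "5 \<le> n" and Fs: "cycle_list Ms Fs"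
    and ham: "hamiltonian n vx" "hamiltonian n vy" "hamiltonian n vz"
    and sum: "sum_list Fs + cycle_edges [n - 1, 0] + cycle_edges vx + cycle_edges vy + cycle_edges vz
      = double_circ n"
    and f: "{n - 2, 0} \<in># cycle_edges vx" "{n - 1, 1} \<in># cycle_edges vx" "{0, 2} \<in># cycle_edges vx"
      "{n - 2, 0} \<in># cycle_edges vy" "{0, 1} \<in># cycle_edges vy" "{1, 2} \<in># cycle_edges vy"
      "{n - 1, 1} \<in># cycle_edges vz" "{0, 1} \<in># cycle_edges vz" "{0, 2} \<in># cycle_edges vz"
    unfolding Q_config_def by blast+
  have ham': "distinct vx" "length vx = n" "set vx = {..<n}" "distinct vy" "set vy = {..<n}"
    "distinct vz" "set vz = {..<n}"
    using ham hamiltonian_length unfolding hamiltonian_def by blast+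
  obtain wx1 where wx1: "distinct wx1" "length wx1 = Suc n" "set wx1 = insert n {..<n}"
      "cycle_edges wx1 + {#{n - 2, 0}#} = cycle_edges vx + {#{n - 2, n}, {n, 0}#}"
    by (rule cycle_subdivide_edge[OF ham'(1) _ _ f(1), where x = n]) (use n ham' in auto)
  have e: "{n - 1, 1} \<in># cycle_edges wx1"
    by (rule mem_after_replacement[OF wx1(4)]) (use f n in \<open>auto simp: doubleton_eq_iff\<close>)
  obtain wx where wx: "distinct wx" "set wx = insert (n + 1) (set wx1)"
      "cycle_edges wx + {#{n - 1, 1}#} = cycle_edges wx1 + {#{n - 1, n + 1}, {n + 1, 1}#}"
    by (rule cycle_subdivide_edge[OF wx1(1) _ _ e, where x = "n + 1"]) (use n wx1 in auto)
  note wx' = replacement_trans[OF wx1(4) wx(3)]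
  obtain wy where wy: "distinct wy"
      "set wy = ({..<n} - set [n - 2, 0, 1, 2]) \<union> set [n - 2, n, n + 1, 1, 0, 2]"
      "cycle_edges wy + path_edges [n - 2, 0, 1, 2] = cycle_edges vy + path_edges [n - 2, n, n + 1, 1, 0, 2]"
    by (rule cycle_reroute[OF ham'(4,5), where p = "[n - 2, 0, 1, 2]" and q = "[n - 2, n, n + 1, 1, 0, 2]"])
      (use n f in \<open>auto simp: insert_commute\<close>)
  obtain wz where wz: "distinct wz"
      "set wz = ({..<n} - set [n - 1, 1, 0, 2]) \<union> set [n - 1, n + 1, n, 0, 1, 2]"
      "cycle_edges wz + path_edges [n - 1, 1, 0, 2] = cycle_edges vz + path_edges [n - 1, n + 1, n, 0, 1, 2]"
    by (rule cycle_reroute[OF ham'(6,7), where p = "[n - 1, 1, 0, 2]" and q = "[n - 1, n + 1, n, 0, 1, 2]"])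
      (use n f in \<open>auto simp: insert_commute\<close>)
  have digon: "cycle_edges [n - 1, n] + cycle_edges [n - 1, 0] = cycle_edges [n - 1, 0] + cycle_edges [n - 1, n]"
    by (rule add.commute)
  from sum_after_replacements[OF sum digon wx' wy(3) wz(3) double_circ_add_digon_from_Q[OF n]]
  have "sum_list (Fs @ [cycle_edges [n - 1, n]]) + cycle_edges [n + 2 - 1, 0] + cycle_edges wx
      + cycle_edges wz + cycle_edges wy = double_circ (n + 2)"
    by (simp add: add_ac)
  moreover have "cycle_list (Ms @ [2]) (Fs @ [cycle_edges [n - 1, n]])"
    using cycle_list_snoc[OF Fs] is_cycle_cycle_edges[of "[n - 1, n]"] n by simp
  moreover have "hamiltonian (n + 2) wx" "hamiltonian (n + 2) wy" "hamiltonian (n + 2) wz"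
    using wx wx1(3) wy wz n unfolding hamiltonian_def lessThan_add2 by auto
  moreover have
    "{n + 2 - 2, 0} \<in># cycle_edges wx" "{n + 2 - 1, 1} \<in># cycle_edges wx" "{0, 2} \<in># cycle_edges wx"
    "{n + 2 - 2, 0} \<in># cycle_edges wz" "{0, 1} \<in># cycle_edges wz" "{1, 2} \<in># cycle_edges wz"
    "{n + 2 - 1, 1} \<in># cycle_edges wy" "{0, 1} \<in># cycle_edges wy" "{0, 2} \<in># cycle_edges wy"
    by (rule mem_after_replacement[OF wx'] mem_after_replacement[OF wy(3)] mem_after_replacement[OF wz(3)];
        use f n in \<open>auto simp: doubleton_eq_iff\<close>)+
  ultimately show ?thesis
    using that[of "cycle_edges [n - 1, n]" wx wz wy] n unfolding Q_config_def by auto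
qed

section \<open>Initial configurations and realizable part lists\<close>

lemma double_circ_5: "double_circ 5 = {#{0,1},{1,2},{2,3},{3,4},{0,2},{1,3},{2,4},{4,0},{3,0},{4,1},
    {0,1},{1,2},{2,3},{3,4},{0,2},{1,3},{2,4},{4,0},{3,0},{4,1}#}"
  by (simp add: double_circ_def path_square_def closing_edges_def insert_commute add_mset_commute
      numeral_eq_Suc lessThan_Suc)

lemma double_circ_6: "double_circ 6 = {#{0,1},{1,2},{2,3},{3,4},{4,5},{5,0},{0,2},{1,3},{2,4},{3,5},{4,0},{5,1},
    {0,1},{1,2},{2,3},{3,4},{4,5},{5,0},{0,2},{1,3},{2,4},{3,5},{4,0},{5,1}#}"
  by (simp add: double_circ_def path_square_def closing_edges_def insert_commute add_mset_commute
      numeral_eq_Suc lessThan_Suc)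

lemma double_circ_7: "double_circ 7 = {#{0,1},{1,2},{2,3},{3,4},{4,5},{5,6},{6,0},{0,2},{1,3},{2,4},{3,5},{4,6},{5,0},{6,1},
    {0,1},{1,2},{2,3},{3,4},{4,5},{5,6},{6,0},{0,2},{1,3},{2,4},{3,5},{4,6},{5,0},{6,1}#}"
  by (simp add: double_circ_def path_square_def closing_edges_def insert_commute add_mset_commute
      numeral_eq_Suc lessThan_Suc)

lemma P_config_5: "P_config 5 [] [] [1,3,0,4,2] [0,3,1,2,4] [0,1,4,3,2] [0,1,4,3,2]"
  unfolding P_config_def hamiltonian_def cycle_list_def
  by (simp add: double_circ_5 cycle_edges_conv_path_edges insert_commute add_mset_commute
      lessThan_nat_numeral lessThan_Suc)

lemma P_config_6: "P_config 6 [3] [cycle_edges [1,3,2]] [4,0,5] [0,4,2,1,3,5] [0,1,5,4,3,2] [0,1,5,3,4,2]"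
  using cycle_list_cycles[of "[[1,3,2]]" "[3]"] unfolding P_config_def hamiltonian_def
  by (simp add: double_circ_6 cycle_edges_conv_path_edges insert_commute add_mset_commute
      lessThan_nat_numeral lessThan_Suc)

lemma P_config_7:
  "P_config 7 [4] [cycle_edges [1,3,4,2]] [5,0,6] [0,5,3,1,2,4,6] [0,1,6,5,4,3,2] [0,1,6,4,5,3,2]"
  using cycle_list_cycles[of "[[1,3,4,2]]" "[4]"] unfolding P_config_def hamiltonian_def
  by (simp add: double_circ_7 cycle_edges_conv_path_edges insert_commute add_mset_commute
      lessThan_nat_numeral lessThan_Suc)

lemma Q_config_5: "Q_config 5 [3] [cycle_edges [1,3,2]] [0,2,4,1,3] [0,1,2,4,3] [0,1,4,3,2]"
  using cycle_list_cycles[of "[[1,3,2]]" "[3]"] unfolding Q_config_def hamiltonian_def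
  by (simp add: double_circ_5 cycle_edges_conv_path_edges insert_commute add_mset_commute
      lessThan_nat_numeral lessThan_Suc)

lemma Q_config_6_4: "Q_config 6 [4] [cycle_edges [1,3,4,2]] [0,2,3,1,5,4] [0,1,2,3,5,4] [0,1,5,3,4,2]"
  using cycle_list_cycles[of "[[1,3,4,2]]" "[4]"] unfolding Q_config_def hamiltonian_def
  by (simp add: double_circ_6 cycle_edges_conv_path_edges insert_commute add_mset_commute
      lessThan_nat_numeral lessThan_Suc)

lemma Q_config_6_2:
  "Q_config 6 [2,2] [cycle_edges [1,3], cycle_edges [2,4]] [0,2,1,5,3,4] [0,1,2,3,5,4] [0,1,5,4,3,2]"
  using cycle_list_cycles[of "[[1,3], [2,4]]" "[2,2]"] unfolding Q_config_def hamiltonian_def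
  by (simp add: double_circ_6 cycle_edges_conv_path_edges insert_commute add_mset_commute
      lessThan_nat_numeral lessThan_Suc)

definition P_realizable :: "nat \<Rightarrow> nat list \<Rightarrow> bool" where
  "P_realizable n L \<longleftrightarrow> (\<exists>Ms Fs vC va vb vc. P_config n Ms Fs vC va vb vc \<and> L = Ms @ [length vC])"

definition Q_realizable :: "nat \<Rightarrow> nat list \<Rightarrow> bool" where
  "Q_realizable n L \<longleftrightarrow> (\<exists>Ms Fs vx vy vz. Q_config n Ms Fs vx vy vz \<and> L = Ms @ [2])"

lemma P_realizable_grow: "P_realizable n (L @ [m]) \<Longrightarrow> P_realizable (n + k) (L @ [m + k])"
proof (induction k)
  case (Suc k)
  then obtain Ms Fs vC va vb vc where "P_config (n + k) Ms Fs vC va vb vc" "L @ [m + k] = Ms @ [length vC]"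
    unfolding P_realizable_def by blast
  moreover from this(1) obtain vC' va' vb' vc'
    where "P_config (Suc (n + k)) Ms Fs vC' va' vb' vc'" "length vC' = Suc (length vC)"
    by (rule P_config_grow)
  ultimately have "P_config (n + Suc k) Ms Fs vC' va' vb' vc'" "L @ [m + Suc k] = Ms @ [length vC']"
    by auto
  then show ?case unfolding P_realizable_def by blast
qed simp

lemma P_realizable_append: "P_realizable n L \<Longrightarrow> 3 \<le> x \<Longrightarrow> P_realizable (n + x) (L @ [x])"
proof -
  assume "P_realizable n L" "3 \<le> x"
  then obtain Ms Fs vC va vb vc where "P_config n Ms Fs vC va vb vc" "L = Ms @ [length vC]"
    unfolding P_realizable_def by blast
  then have "P_realizable (n + 3) (L @ [3])"
    unfolding P_realizable_def by (metis P_config_add_triangle)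
  then show ?thesis using P_realizable_grow[of "n + 3" L 3 "x - 3"] \<open>3 \<le> x\<close> by simp
qed

lemma P_realizable_append_list:
  "P_realizable n L \<Longrightarrow> \<forall>x\<in>set xs. 3 \<le> x \<Longrightarrow> P_realizable (n + sum_list xs) (L @ xs)"
proof (induction xs arbitrary: n L)
  case (Cons x xs)
  then have "P_realizable (n + x) (L @ [x])" using P_realizable_append by simp
  then have "P_realizable (n + x + sum_list xs) ((L @ [x]) @ xs)"
    using Cons.IH[of "n + x" "L @ [x]"] Cons.prems(2) by simp
  then show ?case by (simp add: add.assoc)
qed simp

lemma Q_realizable_append_twos: "Q_realizable n L \<Longrightarrow> Q_realizable (n + 2 * k) (L @ replicate k 2)"
proof (induction k arbitrary: n L)
  case (Suc k)
  from Suc.prems obtain Ms Fs vx vy vz where "Q_config n Ms Fs vx vy vz" "L = Ms @ [2]"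
    unfolding Q_realizable_def by blast
  then have "Q_realizable (n + 2) (L @ [2])"
    unfolding Q_realizable_def by (metis Q_config_add_digon)
  from Suc.IH[OF this] show ?case by (simp add: add.assoc)
qed simp

lemma P_realizable_append_twos:
  "P_realizable n L \<Longrightarrow> 0 < k \<Longrightarrow> Q_realizable (n + 2 * k) (L @ replicate k 2)"
proof -
  assume "P_realizable n L" "0 < k"
  then obtain Ms Fs vC va vb vc where "P_config n Ms Fs vC va vb vc" "L = Ms @ [length vC]"
    unfolding P_realizable_def by blast
  then have "Q_realizable (n + 2) (L @ [2])"
    unfolding Q_realizable_def by (metis P_config_add_digon)
  from Q_realizable_append_twos[OF this, of "k - 1"] show ?thesis
    using \<open>0 < k\<close> by (cases k) (simp_all add: add.assoc)
qed

lemma hamiltonian_is_cycle: "hamiltonian n vs \<Longrightarrow> 2 \<le> n \<Longrightarrow> is_cycle n (cycle_edges vs)"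
  using hamiltonian_length by (auto simp: hamiltonian_def intro: is_cycle_cycle_edges)

lemma has_cycle_decomp_three_hamiltonian:
  assumes "cycle_list Ms Fs" "is_cycle m C" "2 \<le> n"
    "hamiltonian n va" "hamiltonian n vb" "hamiltonian n vc"
    "sum_list Fs + C + cycle_edges va + cycle_edges vb + cycle_edges vc = G"
  shows "has_cycle_decomp (Ms @ [m, n, n, n]) G"
proof (rule has_cycle_decompI)
  show "cycle_list (Ms @ [m, n, n, n]) (Fs @ [C, cycle_edges va, cycle_edges vb, cycle_edges vc])"
    using cycle_list_snoc[OF cycle_list_snoc[OF cycle_list_snoc[OF cycle_list_snoc[OF assms(1,2)]]]]
      hamiltonian_is_cycle assms(3-6) by simp
  show "sum_list (Fs @ [C, cycle_edges va, cycle_edges vb, cycle_edges vc]) = G"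
    using assms(7) by (simp add: add.assoc)
qed

lemma P_realizable_decomp:
  assumes "P_realizable n L"
  shows "has_cycle_decomp (L @ [n, n, n]) (double_circ n)"
proof -
  obtain Ms Fs vC va vb vc where cfg: "P_config n Ms Fs vC va vb vc" and L: "L = Ms @ [length vC]"
    using assms unfolding P_realizable_def by blast
  have "is_cycle (length vC) (cycle_edges vC)"
    using cfg unfolding P_config_def by (auto intro: is_cycle_cycle_edges)
  then show ?thesis
    using cfg unfolding L P_config_def by (auto intro: has_cycle_decomp_three_hamiltonian)
qed

lemma Q_realizable_decomp:
  assumes "Q_realizable n L"
  shows "has_cycle_decomp (L @ [n, n, n]) (double_circ n)"
proof -
  obtain Ms Fs vx vy vz where cfg: "Q_config n Ms Fs vx vy vz" and L: "L = Ms @ [2]"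
    using assms unfolding Q_realizable_def by blast
  have "is_cycle 2 (cycle_edges [n - 1, 0])"
    using cfg unfolding Q_config_def by (auto intro: is_cycle_cycle_edges)
  then show ?thesis
    using cfg unfolding L Q_config_def by (auto intro: has_cycle_decomp_three_hamiltonian)
qed

lemma has_cycle_decomp_perm:
  assumes "has_cycle_decomp L G" "mset L = mset M"
  shows "has_cycle_decomp M G"
proof -
  obtain Cs where Cs: "length Cs = length L" "\<forall>i<length L. is_cycle (L ! i) (Cs ! i)" "sum_list Cs = G"
    using assms(1) unfolding has_cycle_decomp_def by blast
  obtain p where p: "p permutes {..<length L}" "permute_list p L = M"
    using mset_eq_permutation[OF assms(2)[symmetric]] by blast
  have "is_cycle (M ! i) (permute_list p Cs ! i)" if "i < length M" for i
    using that p Cs(1,2) permutes_in_image[OF p(1)] by (auto simp: permute_list_nth)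
  moreover have "sum_list (permute_list p Cs) = G"
    using p(1) Cs(1,3) by (metis mset_permute_list sum_mset_sum_list)
  ultimately show ?thesis
    unfolding has_cycle_decomp_def using p Cs(1) by (metis length_permute_list)
qed

lemma P_realizable_large_parts:
  assumes B3: "\<forall>x\<in>set B. 3 \<le> x" and B5: "5 \<le> sum_list B"
  obtains B' where "mset B' = mset B" "P_realizable (sum_list B) B'"
proof (cases "\<exists>x\<in>set B. 5 \<le> x")
  case True
  then obtain x where x: "x \<in> set B" "5 \<le> x" by blast
  have "P_realizable (5 + (x - 5)) ([] @ [5 + (x - 5)])"
    using P_config_5 by (intro P_realizable_grow) (force simp: P_realizable_def)
  then have "P_realizable x [x]" using x(2) by simp
  moreover have "\<forall>y\<in>set (remove1 x B). 3 \<le> y" using B3 by (meson notin_set_remove1)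
  ultimately have "P_realizable (x + sum_list (remove1 x B)) ([x] @ remove1 x B)"
    by (rule P_realizable_append_list)
  moreover have "mset (x # remove1 x B) = mset B" using x(1) by simp
  ultimately show ?thesis using that by (metis append_Cons append_Nil sum_list.Cons sum_mset_sum_list)
next
  case False
  with B3 have B34: "\<forall>y\<in>set B. y = 3 \<or> y = 4" by force
  with B5 obtain x y B'' where B: "B = x # y # B''"
    by (cases B rule: remdups_adj.cases) auto
  have "P_realizable (x + 3) [x, 3]"
    using B34 B P_config_6 P_config_7 unfolding P_realizable_def by force
  then have "P_realizable (x + 3 + (y - 3)) ([x] @ [3 + (y - 3)])"
    by (intro P_realizable_grow) simp
  then have "P_realizable (x + y) [x, y]" using B34 B by auto
  then have "P_realizable (x + y + sum_list B'') ([x, y] @ B'')"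
    using B3 B by (intro P_realizable_append_list) auto
  then show ?thesis using that[of B] B by (simp add: add.assoc)
qed

lemma realizable_reordering:
  assumes M2: "\<forall>x\<in>set M. 2 \<le> x" and M5: "5 \<le> sum_list M"
  obtains L where "mset L = mset M" "P_realizable (sum_list M) L \<or> Q_realizable (sum_list M) L"
proof -
  define B where "B = filter (\<lambda>x. 3 \<le> x) M"
  define k where "k = length (filter (\<lambda>x. \<not> 3 \<le> x) M)"
  have B3: "\<forall>x\<in>set B. 3 \<le> x" unfolding B_def by simp
  have "filter (\<lambda>x. \<not> 3 \<le> x) M = replicate k 2"
    unfolding k_def using M2 by (intro replicate_eqI) auto
  then have M: "mset M = mset (B @ replicate k 2)"
    unfolding B_def by (metis mset_append mset_filter multiset_partition)
  then have sum: "sum_list M = sum_list B + 2 * k"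
    using sum_mset_sum_list[of M] sum_mset_sum_list[of "B @ replicate k 2"] by (simp add: sum_list_replicate)
  consider "5 \<le> sum_list B" | "B = []" | x where "B = [x]" "x = 3 \<or> x = 4"
  proof (cases B rule: remdups_adj.cases)
    case (2 x)
    moreover have "5 \<le> x \<or> x = 3 \<or> x = 4" using B3 2 by auto
    ultimately show thesis using that by auto
  qed (use that B3 in auto)
  then show ?thesis
  proof cases
    case 1
    then obtain B' where B': "mset B' = mset B" "P_realizable (sum_list B) B'"
      using P_realizable_large_parts B3 by blast
    show ?thesis
    proof (cases "k = 0")
      case True
      then show ?thesis using that[of B'] B' M sum by simp
    next
      case False
      then have "Q_realizable (sum_list M) (B' @ replicate k 2)"
        using P_realizable_append_twos[OF B'(2)] sum by simp
      then show ?thesis using that[of "B' @ replicate k 2"] B'(1) M by simp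
    qed
  next
    case 2
    then have "3 \<le> k" using M5 sum by simp
    obtain j where j: "k = Suc (Suc (Suc j))" using \<open>3 \<le> k\<close> by (metis Suc3_eq_add_3 le_iff_add)
    have "Q_realizable 6 [2, 2, 2]"
      using Q_config_6_2 unfolding Q_realizable_def by force
    moreover have "sum_list M = 6 + 2 * j" using j 2 sum by simp
    moreover have "replicate k (2::nat) = [2, 2, 2] @ replicate j 2" using j by simp
    ultimately have "Q_realizable (sum_list M) (replicate k 2)"
      using Q_realizable_append_twos by metis
    then show ?thesis using that[of "replicate k 2"] M 2 by simp
  next
    case (3 x)
    then have "1 \<le> k" using M5 sum by auto
    have "Q_realizable (x + 2) [x, 2]"
      using 3(2) Q_config_5 Q_config_6_4 unfolding Q_realizable_def by force
    from Q_realizable_append_twos[OF this, of "k - 1"]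
    have "Q_realizable (sum_list M) (x # replicate k 2)"
      using \<open>1 \<le> k\<close> 3 sum by (cases k) auto
    then show ?thesis using that[of "x # replicate k 2"] M 3 by simp
  qed
qed

theorem mainTheorem14:
  fixes n :: nat and M :: "nat list"
  assumes "n \<ge> 5"
    and "\<forall>m \<in> set M. 2 \<le> m \<and> m \<le> n"
    and "sum_list M = n"
  shows "has_cycle_decomp (M @ [n, n, n]) (mult_graph 2 (circulant {1, 2} n))"
proof -
  obtain L where L: "mset L = mset M" "P_realizable n L \<or> Q_realizable n L"
    using realizable_reordering[of M] assms by auto
  then have "has_cycle_decomp (L @ [n, n, n]) (double_circ n)"
    using P_realizable_decomp Q_realizable_decomp by blast
  then have "has_cycle_decomp (M @ [n, n, n]) (double_circ n)"
    by (rule has_cycle_decomp_perm) (simp add: L(1))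
  then show ?thesis using mult_graph_circulant_12 assms(1) by simp
qed

end
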